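(* Let $\nu\ge7$ and $n=2^\nu$. Then the alternating group $\mathrm{Alt}((\mathbb{F}_2)^\nu)$ on the $n$-element set $(\mathbb{F}_2)^\nu$ contains an element $\eta$ of even order with $\mathrm{o}(\eta)>e^{\sqrt{(1/4)\,n\ln n}}$.
   Context: $\mathrm{o}(\eta)$ denotes the order of the permutation $\eta$. *)

theory Defs
  imports Complex_Main "HOL-Combinatorics.Permutations"
begin

definition F2vec :: "nat \<Rightarrow> bool list set" where
  "F2vec \<nu> = {xs. length xs = \<nu>}"

definition Alt :: "'a set \<Rightarrow> ('a \<Rightarrow> 'a) set" where
  "Alt X = {p. p permutes X \<and> evenperm p}"

definition perm_order :: "('a \<Rightarrow> 'a) \<Rightarrow> nat" where
  "perm_order p = (LEAST k. 0 < k \<and> (p ^^ k) = id)"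

end

theory Submission
  imports Defs "HOL-Analysis.Harmonic_Numbers" "HOL-Computational_Algebra.Primes"
begin

text \<open>A permutation whose cycle lengths form a set \<open>A\<close> of positive integers with
  \<open>\<Sum>A \<le> n\<close> has order \<open>lcm A\<close>; if \<open>4\<close> divides \<open>lcm A\<close>, its square is an even permutation
  of even order \<open>lcm A / 2\<close>. For large \<open>n = 2\<^sup>\<nu>\<close> take for \<open>A\<close> the maximal prime powers
  \<open>p\<^sup>k \<le> N\<close>, with \<open>N\<close> as large as possible subject to their sum being at most \<open>n\<close>.
  Then \<open>lcm A = lcm(1..N) \<ge> 2\<^sup>N\<^sup>-\<^sup>2\<close> by Nair's argument, and maximality of \<open>N\<close> gives
  \<open>n < (N + 1)\<^sup>2\<close> and \<open>n ln (N + 1) < (N + 1) (ln (N + 1) + ln lcm(1..N))\<close>, because a prime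
  power \<open>q \<le> N + 1\<close> satisfies \<open>q ln (N + 1) \<le> (N + 1) ln q\<close>. These bounds force
  \<open>lcm(1..N) / 2 > exp (\<surd>(n ln n / 4))\<close>. For \<open>\<nu> \<le> 10\<close> explicit cycle types suffice.\<close>

section \<open>Permutations with prescribed cycle lengths\<close>

definition rotate_residue :: "nat \<times> nat \<Rightarrow> nat \<times> nat" where
  "rotate_residue = (\<lambda>(l, r). (l, Suc r mod l))"

lemma funpow_rotate_residue:
  "r < l \<Longrightarrow> (rotate_residue ^^ k) (l, r) = (l, (r + k) mod l)"
  by (induction k) (simp_all add: rotate_residue_def mod_Suc_eq)

definition transport_perm :: "('b \<Rightarrow> 'a) \<Rightarrow> 'b set \<Rightarrow> ('b \<Rightarrow> 'b) \<Rightarrow> 'a \<Rightarrow> 'a" where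
  "transport_perm g Y c x = (if x \<in> g ` Y then g (c (inv_into Y g x)) else x)"

lemma transport_perm_image:
  assumes "inj_on g Y" "y \<in> Y"
  shows "transport_perm g Y c (g y) = g (c y)"
  using assms by (simp add: transport_perm_def)

lemma funpow_transport_perm:
  assumes g: "inj_on g Y" and c: "c ` Y \<subseteq> Y"
  shows "transport_perm g Y c ^^ k = transport_perm g Y (c ^^ k)"
proof (induction k)
  case 0
  show ?case by (auto simp: fun_eq_iff transport_perm_def f_inv_into_f)
next
  case (Suc k)
  have "transport_perm g Y c (transport_perm g Y (c ^^ k) x) = transport_perm g Y (c ^^ Suc k) x"
    for x
  proof (cases "x \<in> g ` Y")
    case True
    then obtain y where y: "y \<in> Y" "x = g y" by blast
    have "(c ^^ k) y \<in> Y" using y(1) c by (induction k) auto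
    then show ?thesis using y by (simp add: transport_perm_image g)
  qed (simp add: transport_perm_def)
  then show ?case by (auto simp: Suc fun_eq_iff comp_def)
qed

lemma transport_perm_eq_id_iff:
  assumes g: "inj_on g Y" and c: "c ` Y \<subseteq> Y"
  shows "transport_perm g Y c = id \<longleftrightarrow> (\<forall>y\<in>Y. c y = y)"
proof
  assume "transport_perm g Y c = id"
  then have "g (c y) = g y" if "y \<in> Y" for y
    using transport_perm_image[OF g that, of c] by simp
  then show "\<forall>y\<in>Y. c y = y" using c by (meson g image_subset_iff inj_onD)
qed (auto simp: fun_eq_iff transport_perm_def inv_into_f_f g)

lemma funpow_eq_id_imp_permutes:
  assumes "p ^^ k = id" "0 < k" "\<And>x. x \<notin> S \<Longrightarrow> p x = x"
  shows "p permutes S"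
proof -
  obtain j where k: "k = Suc j" using assms(2) gr0_implies_Suc by blast
  have "p ^^ j \<circ> p = id" using assms(1) by (simp add: k funpow_Suc_right del: funpow.simps)
  moreover have "p \<circ> p ^^ j = id" using assms(1) by (simp add: k)
  ultimately have "bij p" by (rule o_bij)
  then show ?thesis using assms(3) by (simp add: permutes_def bij_iff)
qed

text \<open>A product of disjoint cycles whose lengths are the elements of \<open>A\<close>.\<close>
lemma exists_permutes_funpow_eq_id_iff_Lcm_dvd:
  fixes A :: "nat set"
  assumes X: "finite X" and A: "finite A" "0 \<notin> A" "\<Sum>A \<le> card X"
  shows "\<exists>\<theta>. \<theta> permutes X \<and> (\<forall>k. \<theta> ^^ k = id \<longleftrightarrow> Lcm A dvd k)"
proof -
  define Y where "Y = Sigma A (\<lambda>l. {..<l})"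
  have "finite Y" "card Y = \<Sum>A" using A(1) by (auto simp: Y_def card_SigmaI)
  then obtain g where g: "g ` Y \<subseteq> X" "inj_on g Y"
    using card_le_inj[OF \<open>finite Y\<close> X] A(3) by auto
  have rot_Y: "(rotate_residue ^^ k) ` Y \<subseteq> Y" for k
    using A(2) by (auto simp: Y_def funpow_rotate_residue)
  define \<theta> where "\<theta> = transport_perm g Y rotate_residue"
  have rot_id: "(\<forall>y\<in>Y. (rotate_residue ^^ k) y = y) \<longleftrightarrow> (\<forall>l\<in>A. l dvd k)" for k
  proof -
    have cycle: "(\<forall>r<l. (r + k) mod l = r) \<longleftrightarrow> l dvd k" if "l \<in> A" for l
    proof
      assume "\<forall>r<l. (r + k) mod l = r"
      moreover have "0 < l" using that A(2) by (metis gr0I)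
      ultimately have "(0 + k) mod l = 0" by blast
      then show "l dvd k" by (simp add: dvd_eq_mod_eq_0)
    qed (auto elim!: dvdE)
    have "(\<forall>y\<in>Y. (rotate_residue ^^ k) y = y) \<longleftrightarrow> (\<forall>l\<in>A. \<forall>r<l. (r + k) mod l = r)"
      by (auto simp: Y_def funpow_rotate_residue)
    also have "\<dots> \<longleftrightarrow> (\<forall>l\<in>A. l dvd k)" by (simp add: cycle)
    finally show ?thesis .
  qed
  have order: "\<theta> ^^ k = id \<longleftrightarrow> Lcm A dvd k" for k
    using rot_Y[of 1] rot_Y[of k] rot_id[of k]
    by (simp add: \<theta>_def funpow_transport_perm transport_perm_eq_id_iff g Lcm_dvd_iff)
  have "Lcm A \<noteq> 0" using A(1,2) by (simp add: Lcm_0_iff)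
  moreover have "\<theta> x = x" if "x \<notin> X" for x
    using that g(1) by (auto simp: \<theta>_def transport_perm_def)
  ultimately have "\<theta> permutes X" using order[of "Lcm A"] by (intro funpow_eq_id_imp_permutes) auto
  with order show ?thesis by blast
qed

lemma perm_order_eqI:
  assumes "0 < L" "\<And>k. p ^^ k = id \<longleftrightarrow> L dvd k"
  shows "perm_order p = L"
  unfolding perm_order_def
proof (rule Least_equality)
  show "0 < L \<and> p ^^ L = id" using assms by simp
  show "L \<le> k" if "0 < k \<and> p ^^ k = id" for k
    using that assms(2) by (auto intro: dvd_imp_le)
qed

text \<open>Squaring makes the permutation even and halves its order.\<close>
lemma exists_Alt_perm_order_half_Lcm:
  fixes A :: "nat set"
  assumes X: "finite X" and A: "finite A" "0 \<notin> A" "\<Sum>A \<le> card X" "even (Lcm A)"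
  shows "\<exists>\<eta>\<in>Alt X. perm_order \<eta> = Lcm A div 2"
proof -
  obtain \<theta> where \<theta>: "\<theta> permutes X" "\<And>k. \<theta> ^^ k = id \<longleftrightarrow> Lcm A dvd k"
    using exists_permutes_funpow_eq_id_iff_Lcm_dvd[OF X A(1-3)] by blast
  obtain m where m: "Lcm A = 2 * m" using A(4) by blast
  have "Lcm A \<noteq> 0" using A(1,2) by (simp add: Lcm_0_iff)
  then have "m \<noteq> 0" using m by simp
  have "\<theta> \<circ> \<theta> = \<theta> ^^ 2" by (simp add: numeral_2_eq_2)
  then have "(\<theta> \<circ> \<theta>) ^^ k = \<theta> ^^ (2 * k)" for k by (simp only: funpow_mult)
  then have "perm_order (\<theta> \<circ> \<theta>) = m"
    using \<open>m \<noteq> 0\<close> by (intro perm_order_eqI) (simp_all add: \<theta>(2) m)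
  moreover have "\<theta> \<circ> \<theta> \<in> Alt X"
    using \<theta>(1) permutes_imp_permutation[OF X \<theta>(1)]
    by (simp add: Alt_def permutes_compose evenperm_comp)
  ultimately show ?thesis using m by auto
qed

lemma exists_Alt_even_order_gt:
  fixes A :: "nat set" and B :: real
  assumes "finite X" "finite A" "0 \<notin> A" "\<Sum>A \<le> card X" "4 dvd Lcm A" "B < real (Lcm A) / 2"
  shows "\<exists>\<eta>\<in>Alt X. even (perm_order \<eta>) \<and> B < real (perm_order \<eta>)"
proof -
  obtain m where m: "Lcm A = 4 * m" using assms(5) by blast
  then have "even (Lcm A)" by simp
  then obtain \<eta> where \<eta>: "\<eta> \<in> Alt X" "perm_order \<eta> = 2 * m"
    using exists_Alt_perm_order_half_Lcm[OF assms(1-4)] m by auto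
  then have "even (perm_order \<eta>)" "B < real (perm_order \<eta>)" using assms(6) m by simp_all
  with \<eta>(1) show ?thesis by blast
qed

section \<open>Nair's lower bound for \<open>lcm(1..N)\<close>\<close>

text \<open>This is the Beta integral \<open>\<integral>\<^sub>0\<^sup>1 x\<^sup>a\<^sup>-\<^sup>1 (1-x)\<^sup>b dx\<close>, expanded by the binomial theorem.\<close>
definition beta_sum :: "nat \<Rightarrow> nat \<Rightarrow> real" where
  "beta_sum a b = (\<Sum>i\<le>b. (-1) ^ i * real (b choose i) / real (a + i))"

lemma beta_sum_shift:
  "beta_sum a b = 1 / real a + (\<Sum>i\<le>b. (-1) ^ Suc i * real (b choose Suc i) / real (a + Suc i))"
proof -
  have "beta_sum a b = (\<Sum>i\<le>Suc b. (-1) ^ i * real (b choose i) / real (a + i))"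
    by (simp add: beta_sum_def)
  also have "\<dots> = 1 / real a + (\<Sum>i\<le>b. (-1) ^ Suc i * real (b choose Suc i) / real (a + Suc i))"
    by (subst sum.atMost_Suc_shift) simp
  finally show ?thesis .
qed

lemma beta_sum_Suc: "beta_sum a (Suc b) = beta_sum a b - beta_sum (Suc a) b"
proof -
  have "beta_sum a (Suc b) =
      1 / real a + (\<Sum>i\<le>b. (-1) ^ Suc i * real (Suc b choose Suc i) / real (a + Suc i))"
    unfolding beta_sum_def by (subst sum.atMost_Suc_shift) simp
  also have "\<dots> = 1 / real a + (\<Sum>i\<le>b. (-1) ^ Suc i * real (b choose Suc i) / real (a + Suc i))
      - (\<Sum>i\<le>b. (-1) ^ i * real (b choose i) / real (Suc a + i))"
  proof -
    have "(-1) ^ Suc i * real (Suc b choose Suc i) / real (a + Suc i) =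
        (-1) ^ Suc i * real (b choose Suc i) / real (a + Suc i)
        - (-1) ^ i * real (b choose i) / real (Suc a + i)" for i
      by (simp add: diff_divide_distrib add_divide_distrib algebra_simps)
    then show ?thesis by (simp only: sum_subtractf add_diff_eq)
  qed
  finally show ?thesis by (simp add: beta_sum_shift[of a b] beta_sum_def[of "Suc a"])
qed

lemma beta_sum_eq_fact: "beta_sum (Suc c) b = fact b * fact c / fact (Suc c + b)"
proof (induction b arbitrary: c)
  case 0
  have "(fact (Suc c) :: real) = real (Suc c) * fact c" by simp
  then show ?case by (simp add: beta_sum_def del: fact_Suc)
next
  case (Suc b)
  define F :: real where "F = fact (Suc c + b)"
  define K :: real where "K = real (c + b + 2)"
  have pos: "0 < F" "0 < K" by (simp_all add: F_def K_def)
  have "fact (Suc (Suc c) + b) = K * F" "fact (Suc c + Suc b) = K * F"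
    "fact (Suc c) = real (c + 1) * (fact c :: real)" "fact (Suc b) = real (b + 1) * (fact b :: real)"
    by (simp_all add: F_def K_def algebra_simps)
  then have "beta_sum (Suc c) (Suc b) =
      fact b * fact c / F - fact b * (real (c + 1) * fact c) / (K * F)"
    unfolding beta_sum_Suc Suc.IH F_def[symmetric] by simp
  also have "\<dots> = fact b * fact c * (K - real (c + 1)) / (K * F)"
    using pos by (simp add: field_simps)
  also have "K - real (c + 1) = real (b + 1)" by (simp add: K_def)
  finally show ?case using \<open>fact (Suc c + Suc b) = K * F\<close> \<open>fact (Suc b) = _\<close>
    by (simp add: algebra_simps)
qed

lemma mult_binomial_dvd_Lcm_atLeastAtMost:
  assumes "1 \<le> a"
  shows "a * ((a + b) choose a) dvd Lcm {1..a + b}"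
proof -
  define L where "L = Lcm {1..a + b}"
  define C where "C = (a + b) choose a"
  obtain c where c: "a = Suc c" using assms by (cases a) auto
  have C_eq: "real C = fact (a + b) / (fact a * fact b)"
    unfolding C_def by (simp add: binomial_fact)
  have "(fact a :: real) = real a * fact c" "0 < a" by (simp_all add: c)
  then have beta: "real a * real C * beta_sum a b = 1"
    unfolding C_eq beta_sum_eq_fact[of c b, folded c] by (simp del: fact_Suc add: field_simps)
  have dvd: "a + i dvd L" if "i \<le> b" for i
    using that assms unfolding L_def by (intro dvd_Lcm) auto
  define z :: int where "z = (\<Sum>i\<le>b. (-1) ^ i * int (b choose i) * int (L div (a + i)))"
  text \<open>\<open>L\<close> times the Beta sum is an integer, but it also equals \<open>L / (a C)\<close>.\<close>
  have "real_of_int z = (\<Sum>i\<le>b. (-1) ^ i * real (b choose i) * (real L / real (a + i)))"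
    unfolding z_def using dvd by (auto intro!: sum.cong simp: real_of_nat_div)
  also have "\<dots> = real L * beta_sum a b"
    unfolding beta_sum_def by (simp add: sum_distrib_left field_simps)
  finally have "real_of_int z = real L * beta_sum a b" .
  then have "real L = real (a * C) * real_of_int z"
    using beta by (simp add: algebra_simps)
  then have "int L = int (a * C) * z" by (metis of_int_eq_iff of_int_mult of_int_of_nat_eq)
  then show ?thesis unfolding L_def C_def by (metis dvd_triv_left int_dvd_int_iff)
qed

definition lcm_upto :: "nat \<Rightarrow> nat" where
  "lcm_upto N = Lcm {1..N}"

lemma lcm_upto_pos: "0 < lcm_upto N"
proof -
  have "Lcm {1..N} \<noteq> (0::nat)" by (simp add: Lcm_0_iff)
  then show ?thesis unfolding lcm_upto_def by (metis gr0I)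
qed

lemma dvd_lcm_upto: "1 \<le> k \<Longrightarrow> k \<le> N \<Longrightarrow> k dvd lcm_upto N"
  unfolding lcm_upto_def by (auto intro: dvd_Lcm)

lemma lcm_upto_mono: "M \<le> N \<Longrightarrow> lcm_upto M \<le> lcm_upto N"
  using lcm_upto_pos[of N] unfolding lcm_upto_def by (auto intro: dvd_imp_le Lcm_subset)

lemma lcm_upto_Suc_le: "lcm_upto (Suc N) \<le> Suc N * lcm_upto N"
proof -
  have "lcm_upto (Suc N) = lcm (Suc N) (lcm_upto N)"
    unfolding lcm_upto_def by (simp add: atLeastAtMostSuc_conv)
  moreover have "lcm (Suc N) (lcm_upto N) dvd Suc N * lcm_upto N"
    by (rule lcm_least) (rule dvd_triv_left, rule dvd_triv_right)
  ultimately show ?thesis using lcm_upto_pos[of N] by (simp add: dvd_imp_le)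
qed

text \<open>Nair's argument: the central binomial coefficient times \<open>m + 1\<close> divides the lcm.\<close>
lemma four_pow_le_lcm_upto: "4 ^ m \<le> lcm_upto (2 * m + 1)"
proof -
  have "2 * 4 ^ m = (2::nat) ^ (2 * m + 1)" by (simp add: power_add power_mult)
  also have "\<dots> = (\<Sum>k\<le>2 * m + 1. (2 * m + 1) choose k)" by (simp only: choose_row_sum)
  also have "\<dots> \<le> (\<Sum>k\<le>2 * m + 1. (2 * m + 1) choose m)"
    using binomial_maximum[of "2 * m + 1"] by (intro sum_mono) simp
  also have "\<dots> = 2 * ((m + 1) * ((2 * m + 1) choose (m + 1)))"
    using binomial_symmetric[of m "2 * m + 1"] by simp
  finally have "4 ^ m \<le> (m + 1) * ((2 * m + 1) choose (m + 1))" by simp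
  also have "\<dots> \<le> lcm_upto (2 * m + 1)"
    using mult_binomial_dvd_Lcm_atLeastAtMost[of "m + 1" m] lcm_upto_pos[of "2 * m + 1"]
    unfolding lcm_upto_def by (intro dvd_imp_le) (simp_all add: mult_2)
  finally show ?thesis .
qed

lemma two_pow_le_lcm_upto:
  assumes "2 \<le> N"
  shows "2 ^ (N - 2) \<le> lcm_upto N"
proof -
  define m where "m = (N - 1) div 2"
  have "2 ^ (N - 2) \<le> (2::nat) ^ (2 * m)"
    using assms unfolding m_def by (intro power_increasing) auto
  also have "\<dots> = 4 ^ m" by (simp add: power_mult)
  also have "\<dots> \<le> lcm_upto (2 * m + 1)" by (rule four_pow_le_lcm_upto)
  also have "\<dots> \<le> lcm_upto N" using assms unfolding m_def by (intro lcm_upto_mono) linarith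
  finally show ?thesis .
qed

lemma ln_lcm_upto_ge:
  assumes "2 \<le> N"
  shows "(real N - 2) * ln 2 \<le> ln (real (lcm_upto N))"
proof -
  have "(2::real) ^ (N - 2) \<le> real (lcm_upto N)"
    using two_pow_le_lcm_upto[OF assms] by (metis of_nat_le_iff of_nat_numeral of_nat_power)
  then have "ln ((2::real) ^ (N - 2)) \<le> ln (real (lcm_upto N))"
    using lcm_upto_pos[of N] by simp
  then show ?thesis using assms by (simp add: ln_realpow of_nat_diff)
qed

section \<open>The prime power parts of \<open>lcm(1..N)\<close>\<close>

lemma prime_power_dvd_Lcm_imp_dvd_elem:
  fixes A :: "nat set"
  assumes "finite A" "0 \<notin> A" "prime p" "0 < k" "p ^ k dvd Lcm A"
  shows "\<exists>x\<in>A. p ^ k dvd x"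
  using assms
proof (induction A rule: finite_induct)
  case empty
  then have "p dvd 1" by (metis Lcm_empty dvd_power dvd_trans)
  then show ?case using \<open>prime p\<close> by simp
next
  case (insert x A)
  have "x \<noteq> 0" "Lcm A \<noteq> 0" using insert by (auto simp: Lcm_0_iff)
  have "p ^ k dvd lcm x (Lcm A)" using insert.prems by simp
  then have "k \<le> multiplicity p (lcm x (Lcm A))"
    using \<open>x \<noteq> 0\<close> \<open>Lcm A \<noteq> 0\<close> \<open>prime p\<close> by (intro multiplicity_geI) auto
  then have "k \<le> multiplicity p x \<or> k \<le> multiplicity p (Lcm A)"
    using multiplicity_lcm[OF \<open>x \<noteq> 0\<close> \<open>Lcm A \<noteq> 0\<close> \<open>prime p\<close>] by auto
  then show ?case
  proof
    assume "k \<le> multiplicity p x"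
    then show ?case by (auto intro: multiplicity_dvd')
  next
    assume "k \<le> multiplicity p (Lcm A)"
    then have "p ^ k dvd Lcm A" by (rule multiplicity_dvd')
    then show ?case using insert by auto
  qed
qed

text \<open>For a prime \<open>p \<le> N\<close>, the largest power of \<open>p\<close> that is at most \<open>N\<close>.\<close>
definition max_prime_power :: "nat \<Rightarrow> nat \<Rightarrow> nat" where
  "max_prime_power N p = p ^ multiplicity p (lcm_upto N)"

definition prime_power_parts :: "nat \<Rightarrow> nat set" where
  "prime_power_parts N = max_prime_power N ` prime_factors (lcm_upto N)"

lemma max_prime_power_dvd: "max_prime_power N p dvd lcm_upto N"
  unfolding max_prime_power_def by (rule multiplicity_dvd)

lemma max_prime_power_le:
  assumes "p \<in> prime_factors (lcm_upto N)"
  shows "max_prime_power N p \<le> N"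
proof -
  have "\<exists>x\<in>{1..N}. max_prime_power N p dvd x"
    using assms max_prime_power_dvd[of N p] lcm_upto_pos[of N]
    unfolding max_prime_power_def
    by (intro prime_power_dvd_Lcm_imp_dvd_elem) (auto simp: lcm_upto_def prime_factors_multiplicity)
  then show ?thesis by (auto dest: dvd_imp_le)
qed

lemma prime_factors_lcm_uptoD:
  assumes "p \<in> prime_factors (lcm_upto N)"
  shows "prime p" "0 < multiplicity p (lcm_upto N)"
  using assms lcm_upto_pos[of N] by (auto simp: prime_factors_multiplicity)

lemma max_prime_power_ge:
  assumes "p \<in> prime_factors (lcm_upto N)"
  shows "p \<le> max_prime_power N p"
proof -
  have "p ^ 1 \<le> p ^ multiplicity p (lcm_upto N)"
    using prime_factors_lcm_uptoD[OF assms] prime_ge_1_nat by (intro power_increasing) auto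
  then show ?thesis by (simp add: max_prime_power_def)
qed

lemma two_le_max_prime_power: "p \<in> prime_factors (lcm_upto N) \<Longrightarrow> 2 \<le> max_prime_power N p"
  using max_prime_power_ge prime_ge_2_nat le_trans by blast

lemma inj_on_max_prime_power: "inj_on (max_prime_power N) (prime_factors (lcm_upto N))"
proof
  fix p q
  assume p: "p \<in> prime_factors (lcm_upto N)" and q: "q \<in> prime_factors (lcm_upto N)"
    and "max_prime_power N p = max_prime_power N q"
  then show "p = q"
    using prime_power_inj'(1) lcm_upto_pos[of N]
    by (auto simp: max_prime_power_def prime_factors_multiplicity)
qed

lemma prod_max_prime_power: "lcm_upto N = (\<Prod>p\<in>prime_factors (lcm_upto N). max_prime_power N p)"
  unfolding max_prime_power_def using prime_factorization_nat[OF lcm_upto_pos[of N]] by simp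

lemma sum_prime_power_parts:
  "\<Sum>(prime_power_parts N) = (\<Sum>p\<in>prime_factors (lcm_upto N). max_prime_power N p)"
  unfolding prime_power_parts_def using inj_on_max_prime_power by (simp add: sum.reindex)

lemma finite_prime_power_parts: "finite (prime_power_parts N)"
  by (simp add: prime_power_parts_def)

lemma zero_notin_prime_power_parts: "0 \<notin> prime_power_parts N"
  unfolding prime_power_parts_def using two_le_max_prime_power by fastforce

lemma Lcm_prime_power_parts: "Lcm (prime_power_parts N) = lcm_upto N"
proof (rule dvd_antisym)
  show "Lcm (prime_power_parts N) dvd lcm_upto N"
    unfolding prime_power_parts_def by (auto intro: Lcm_least max_prime_power_dvd)
  have "Lcm (prime_power_parts N) \<noteq> 0"
    using finite_prime_power_parts zero_notin_prime_power_parts by (simp add: Lcm_0_iff)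
  moreover have "multiplicity p (lcm_upto N) \<le> multiplicity p (Lcm (prime_power_parts N))"
    if "prime p" for p
  proof (cases "p \<in> prime_factors (lcm_upto N)")
    case True
    then have "max_prime_power N p dvd Lcm (prime_power_parts N)"
      unfolding prime_power_parts_def by (auto intro: dvd_Lcm)
    then show ?thesis
      using \<open>Lcm (prime_power_parts N) \<noteq> 0\<close> that
      unfolding max_prime_power_def by (intro multiplicity_geI) auto
  next
    case False
    then show ?thesis using that lcm_upto_pos[of N] by (simp add: prime_factors_multiplicity)
  qed
  ultimately show "lcm_upto N dvd Lcm (prime_power_parts N)"
    using lcm_upto_pos[of N] by (intro multiplicity_le_imp_dvd) auto
qed

lemma sum_prime_power_parts_le: "\<Sum>(prime_power_parts N) \<le> N * N"
proof -
  have "prime_factors (lcm_upto N) \<subseteq> {1..N}"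
    using max_prime_power_ge max_prime_power_le prime_ge_1_nat by force
  then have "card (prime_factors (lcm_upto N)) \<le> N"
    using card_mono[of "{1..N}"] by fastforce
  moreover have "\<Sum>(prime_power_parts N) \<le> card (prime_factors (lcm_upto N)) * N"
    unfolding sum_prime_power_parts using max_prime_power_le
    by (metis (no_types, lifting) sum_bounded_above of_nat_id)
  ultimately show ?thesis by (meson le_trans mult_le_mono1)
qed

lemma ln_lcm_upto:
  "ln (real (lcm_upto N)) = (\<Sum>p\<in>prime_factors (lcm_upto N). ln (real (max_prime_power N p)))"
proof -
  have "real (lcm_upto N) = (\<Prod>p\<in>prime_factors (lcm_upto N). real (max_prime_power N p))"
    by (subst prod_max_prime_power) simp
  then have "ln (real (lcm_upto N)) = ln (\<Prod>p\<in>prime_factors (lcm_upto N). real (max_prime_power N p))"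
    by simp
  also have "\<dots> = (\<Sum>p\<in>prime_factors (lcm_upto N). ln (real (max_prime_power N p)))"
    by (intro ln_prod) (auto dest: two_le_max_prime_power)
  finally show ?thesis .
qed

lemma ln_lcm_upto_le_sum_prime_power_parts: "ln (real (lcm_upto N)) \<le> real (\<Sum>(prime_power_parts N))"
proof -
  have "ln (real (max_prime_power N p)) \<le> real (max_prime_power N p)"
    if "p \<in> prime_factors (lcm_upto N)" for p
    using two_le_max_prime_power[OF that] ln_le_minus_one[of "real (max_prime_power N p)"] by simp
  then show ?thesis unfolding ln_lcm_upto sum_prime_power_parts of_nat_sum by (rule sum_mono)
qed

text \<open>Since \<open>ln x / x\<close> decreases for \<open>x \<ge> e\<close> and \<open>ln 4 / 4 = ln 2 / 2\<close>.\<close>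
lemma mult_ln_le_mult_ln:
  fixes q N :: nat
  assumes "2 \<le> q" "q \<le> N" "4 \<le> N"
  shows "real q * ln (real N) \<le> real N * ln (real q)"
proof -
  have e: "exp 1 \<le> (3::real)" by (rule exp_le)
  have "ln (real N) / real N \<le> ln (real q) / real q"
  proof (cases "3 \<le> q")
    case True
    then show ?thesis using e assms(2) by (intro ln_x_over_x_mono) auto
  next
    case False
    then have "q = 2" using assms by simp
    have "ln (real N) / real N \<le> ln 4 / 4" using e assms(3) by (intro ln_x_over_x_mono) auto
    also have "ln (4::real) = 2 * ln 2" using ln_realpow[of 2 2] by simp
    finally show ?thesis using \<open>q = 2\<close> by simp
  qed
  then show ?thesis using assms by (simp add: divide_le_eq le_divide_eq mult.commute)
qed

lemma sum_prime_power_parts_mult_ln_le: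
  assumes "4 \<le> N"
  shows "real (\<Sum>(prime_power_parts N)) * ln (real N) \<le> real N * ln (real (lcm_upto N))"
proof -
  have "real (\<Sum>(prime_power_parts N)) * ln (real N) =
      (\<Sum>p\<in>prime_factors (lcm_upto N). real (max_prime_power N p) * ln (real N))"
    by (simp add: sum_prime_power_parts sum_distrib_right)
  also have "\<dots> \<le> (\<Sum>p\<in>prime_factors (lcm_upto N). real N * ln (real (max_prime_power N p)))"
    using assms by (intro sum_mono mult_ln_le_mult_ln two_le_max_prime_power max_prime_power_le)
  also have "\<dots> = real N * ln (real (lcm_upto N))" by (simp add: ln_lcm_upto sum_distrib_left)
  finally show ?thesis .
qed

lemma square_sub_ln2_ge:
  fixes M \<Lambda> :: real
  assumes M: "41 \<le> M" and \<Lambda>: "(M - 3) * ln 2 \<le> \<Lambda>"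
  shows "(M * \<Lambda> + M * ln M) / 2 \<le> (\<Lambda> - ln 2)\<^sup>2"
proof -
  define a where "a = ln (2::real)"
  have a: "2/3 \<le> a" "a \<le> 25/36" using ln2_ge_two_thirds ln2_le_25_over_36 by (simp_all add: a_def)
  have "ln (M / 16) \<le> M / 16 - 1" using M by (intro ln_le_minus_one) simp
  moreover have "ln (M / 16) = ln M - 4 * a"
    using M ln_realpow[of 2 4] by (simp add: ln_div a_def)
  ultimately have ln_M: "ln M \<le> M / 16 + 4 * a - 1" by simp
  define L where "L = (M - 3) * a"
  text \<open>\<open>x \<mapsto> (x - a)\<^sup>2 - M x / 2\<close> increases beyond \<open>a + M / 4\<close>, which is below \<open>L\<close>.\<close>
  have mono: "(L - a)\<^sup>2 - M * L / 2 \<le> (\<Lambda> - a)\<^sup>2 - M * \<Lambda> / 2"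
  proof -
    have "2 * M / 3 - 2 \<le> L" unfolding L_def using mult_left_mono[OF a(1), of "M - 3"] M by simp
    then have "0 \<le> (\<Lambda> - L) * (\<Lambda> + L - 2 * a - M / 2)"
      using \<Lambda> a M by (intro mult_nonneg_nonneg) (simp_all add: L_def a_def)
    then show ?thesis by (simp add: power2_eq_square field_simps)
  qed
  have base: "M * (M / 16 + 4 * a - 1) / 2 \<le> (L - a)\<^sup>2 - M * L / 2"
  proof -
    define B where "B = (a + 2/3) * (M - 4)\<^sup>2 - M * (M - 3) / 2 - 2 * M"
    have "0 \<le> M * (5 * M - 67)" using M by simp
    then have "0 \<le> (M * (5 * M - 67) + 128) / 6" by simp
    also have "\<dots> = (4/3) * (M - 4)\<^sup>2 - M * (M - 3) / 2 - 2 * M"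
      by (simp add: power2_eq_square field_simps)
    also have "\<dots> \<le> B"
      using mult_right_mono[of "4/3" "a + 2/3" "(M - 4)\<^sup>2"] a(1) by (simp add: B_def)
    finally have "0 \<le> B" .
    then have "0 \<le> (a - 2/3) * B" using a(1) by simp
    moreover have "0 \<le> (M - 41) * (23 * M - 33)" using M by simp
    moreover have "(L - a)\<^sup>2 - M * L / 2 - M * (M / 16 + 4 * a - 1) / 2
        = (a - 2/3) * B + ((M - 41) * (23 * M - 33) + 695) / 288"
      unfolding L_def B_def by (simp add: power2_eq_square field_simps)
    ultimately have "0 \<le> (L - a)\<^sup>2 - M * L / 2 - M * (M / 16 + 4 * a - 1) / 2" by simp
    then show ?thesis by (simp only: diff_ge_0_iff_ge)
  qed
  have "M * ln M \<le> M * (M / 16 + 4 * a - 1)" using ln_M M by (intro mult_left_mono) auto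
  with mono base show ?thesis unfolding a_def by (simp add: add_divide_distrib)
qed

lemma exists_maximal_prime_power_parts_le:
  fixes n :: nat
  assumes n: "1600 \<le> n"
  shows "\<exists>N\<ge>40. \<Sum>(prime_power_parts N) \<le> n \<and> n < \<Sum>(prime_power_parts (Suc N))"
proof -
  define S where "S = {N. \<Sum>(prime_power_parts N) \<le> n}"
  have bounded: "N \<le> 2 * n + 2" if "N \<in> S" for N
  proof (rule ccontr)
    assume "\<not> N \<le> 2 * n + 2"
    then have N: "2 \<le> N" "2 * real n < real N - 2" by auto
    have "(real N - 2) * (2/3) \<le> (real N - 2) * ln 2"
      using ln2_ge_two_thirds N by (intro mult_left_mono) auto
    also have "\<dots> \<le> real (\<Sum>(prime_power_parts N))"
      using ln_lcm_upto_ge[OF N(1)] ln_lcm_upto_le_sum_prime_power_parts[of N] by linarith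
    also have "\<dots> \<le> real n" using that by (simp add: S_def del: of_nat_sum)
    moreover have "(real N - 2) * (2/3) = (2/3) * real N - 4/3" by simp
    ultimately show False using N by linarith
  qed
  then have "finite S" by (intro finite_subset[of S "{..2 * n + 2}"]) auto
  moreover have "40 \<in> S" using sum_prime_power_parts_le[of 40] n by (simp add: S_def)
  ultimately have "Max S \<in> S" "40 \<le> Max S" "Suc (Max S) \<notin> S"
    by (auto intro: Max_in Max_ge) (metis Max_ge Suc_n_not_le_n)
  then show ?thesis by (auto simp: S_def not_le)
qed

lemma ln_lcm_upto_Suc_le:
  "ln (real (lcm_upto (Suc N))) \<le> ln (real (Suc N)) + ln (real (lcm_upto N))"
proof -
  have "real (lcm_upto (Suc N)) \<le> real (Suc N) * real (lcm_upto N)"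
    using lcm_upto_Suc_le[of N] by (simp only: of_nat_le_iff flip: of_nat_mult)
  then have "ln (real (lcm_upto (Suc N))) \<le> ln (real (Suc N) * real (lcm_upto N))"
    using lcm_upto_pos[of "Suc N"] by simp
  then show ?thesis using lcm_upto_pos[of N] by (simp add: ln_mult)
qed

lemma exp_sqrt_lt_half_lcm_upto:
  fixes n N :: nat
  assumes N: "40 \<le> N" and n: "0 < n" "n < \<Sum>(prime_power_parts (Suc N))"
  shows "exp (sqrt ((1/4) * real n * ln (real n))) < real (lcm_upto N) / 2"
proof -
  define M where "M = real (Suc N)"
  define \<Lambda> where "\<Lambda> = ln (real (lcm_upto N))"
  have M: "41 \<le> M" using N by (simp add: M_def)
  have \<Lambda>: "(M - 3) * ln 2 \<le> \<Lambda>" using ln_lcm_upto_ge[of N] N by (simp add: M_def \<Lambda>_def)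
  have "real n * ln M < real (\<Sum>(prime_power_parts (Suc N))) * ln M"
    using n(2) M by (intro mult_strict_right_mono) (simp_all del: of_nat_sum)
  also have "\<dots> \<le> M * ln (real (lcm_upto (Suc N)))"
    using sum_prime_power_parts_mult_ln_le[of "Suc N"] N by (simp add: M_def)
  also have "\<dots> \<le> M * (ln M + \<Lambda>)"
    using ln_lcm_upto_Suc_le[of N] M by (simp add: M_def \<Lambda>_def)
  finally have n_ln_M: "real n * ln M < M * (ln M + \<Lambda>)" .
  have "real n < M * M"
    using n(2) sum_prime_power_parts_le[of "Suc N"] unfolding M_def
    by (metis of_nat_less_iff of_nat_mult order_less_le_trans)
  then have "ln (real n) < 2 * ln M" using n(1) M by (simp add: ln_mult flip: ln_less_cancel_iff)
  then have "(1/4) * real n * ln (real n) \<le> (real n * ln M) / 2"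
    using n(1) by (simp add: mult_left_mono)
  also have "\<dots> < (M * \<Lambda> + M * ln M) / 2" using n_ln_M by (simp add: algebra_simps)
  also have "\<dots> \<le> (\<Lambda> - ln 2)\<^sup>2" by (rule square_sub_ln2_ge[OF M \<Lambda>])
  finally have "sqrt ((1/4) * real n * ln (real n)) < sqrt ((\<Lambda> - ln 2)\<^sup>2)"
    by (simp only: real_sqrt_less_iff)
  also have "\<dots> = \<Lambda> - ln 2"
    using \<Lambda> M mult_left_mono[OF ln2_ge_two_thirds, of "M - 3"] ln2_le_25_over_36 by simp
  finally have "exp (sqrt ((1/4) * real n * ln (real n))) < exp (\<Lambda> - ln 2)" by simp
  also have "\<dots> = real (lcm_upto N) / 2" using lcm_upto_pos[of N] by (simp add: \<Lambda>_def exp_diff)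
  finally show ?thesis .
qed

lemma exp_sqrt_le_three_pow:
  fixes \<nu> n k :: nat
  assumes n: "n = 2 ^ \<nu>" and k: "25 * real n * real \<nu> \<le> 144 * (real k)\<^sup>2"
  shows "exp (sqrt ((1/4) * real n * ln (real n))) \<le> 3 ^ k"
proof -
  have "(1/4) * real n * ln (real n) = (1/4) * real n * (real \<nu> * ln 2)"
    by (simp add: n ln_realpow)
  also have "\<dots> \<le> (1/4) * real n * (real \<nu> * (25/36))"
    using ln2_le_25_over_36 by (intro mult_left_mono) auto
  also have "\<dots> \<le> (real k)\<^sup>2" using k by simp
  finally have "sqrt ((1/4) * real n * ln (real n)) \<le> sqrt ((real k)\<^sup>2)"
    by (simp only: real_sqrt_le_iff)
  then have "exp (sqrt ((1/4) * real n * ln (real n))) \<le> exp 1 ^ k"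
    by (simp add: exp_of_nat_mult[symmetric])
  also have "\<dots> \<le> 3 ^ k" using exp_le by (intro power_mono) auto
  finally show ?thesis .
qed

text \<open>Cycle types of pairwise coprime prime powers, chosen by hand.\<close>
lemma exists_cycle_type_small:
  fixes \<nu> n :: nat
  assumes "\<nu> \<in> {7, 8, 9, 10}" and n: "n = 2 ^ \<nu>"
  shows "\<exists>A. finite A \<and> 0 \<notin> A \<and> \<Sum>A \<le> n \<and> 4 dvd Lcm A \<and>
           exp (sqrt ((1/4) * real n * ln (real n))) < real (Lcm A) / 2"
proof -
  have cycle_type: "\<exists>A. finite A \<and> 0 \<notin> A \<and> \<Sum>A \<le> n \<and> 4 dvd Lcm A \<and>
           exp (sqrt ((1/4) * real n * ln (real n))) < real (Lcm A) / 2"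
    if "finite A" "0 \<notin> A" "\<Sum>A \<le> n" "Lcm A = L" "4 dvd L"
      "25 * real n * real \<nu> \<le> 144 * (real k)\<^sup>2" "3 ^ k < real L / 2" for A :: "nat set" and k L
    using that exp_sqrt_le_three_pow[OF n, of k] by (intro exI[of _ A]) auto
  from assms(1) consider "\<nu> = 7" | "\<nu> = 8" | "\<nu> = 9" | "\<nu> = 10" by auto
  then show ?thesis
  proof cases
    case 1
    show ?thesis
      by (rule cycle_type[where A = "{5, 7, 9, 11, 13, 16, 17, 19, 23}" and k = 13])
        (simp add: 1 n lcm_nat_def gcd_non_0_nat)+
  next
    case 2
    show ?thesis
      by (rule cycle_type[where A = "{7, 11, 13, 17, 19, 23, 25, 27, 29, 31, 32}" and k = 19])
        (simp add: 2 n lcm_nat_def gcd_non_0_nat)+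
  next
    case 3
    show ?thesis
      by (rule cycle_type[where
            A = "{11, 13, 17, 19, 23, 25, 27, 29, 31, 32, 37, 41, 43, 47, 49, 53}" and k = 29])
        (simp add: 3 n lcm_nat_def gcd_non_0_nat)+
  next
    case 4
    show ?thesis
      by (rule cycle_type[where
            A = "{11, 13, 17, 19, 23, 25, 29, 31, 37, 41, 43, 47, 49, 53, 59, 61, 64, 67, 71, 73, 79, 81}"
            and k = 43])
        (simp add: 4 n lcm_nat_def gcd_non_0_nat)+
  qed
qed

lemma finite_F2vec: "finite (F2vec \<nu>)" and card_F2vec: "card (F2vec \<nu>) = 2 ^ \<nu>"
proof -
  have F2vec: "F2vec \<nu> = {xs. set xs \<subseteq> (UNIV :: bool set) \<and> length xs = \<nu>}"
    by (simp add: F2vec_def)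
  show "finite (F2vec \<nu>)" using finite_lists_length_eq[of "UNIV :: bool set" \<nu>] by (simp add: F2vec)
  show "card (F2vec \<nu>) = 2 ^ \<nu>" using card_lists_length_eq[of "UNIV :: bool set" \<nu>] by (simp add: F2vec)
qed

theorem mainTheorem13:
  fixes \<nu> n :: nat
  assumes "\<nu> \<ge> 7" and "n = 2 ^ \<nu>"
  shows "\<exists>\<eta> \<in> Alt (F2vec \<nu>). even (perm_order \<eta>) \<and>
           real (perm_order \<eta>) > exp (sqrt ((1/4) * real n * ln (real n)))"
proof -
  have "\<exists>A. finite A \<and> 0 \<notin> A \<and> \<Sum>A \<le> n \<and> 4 dvd Lcm A \<and>
          exp (sqrt ((1/4) * real n * ln (real n))) < real (Lcm A) / 2"
  proof (cases "\<nu> \<le> 10")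
    case True
    then show ?thesis using assms by (intro exists_cycle_type_small) auto
  next
    case False
    have n: "(2::nat) ^ 11 \<le> n" unfolding assms(2) using False by (intro power_increasing) auto
    then obtain N where "40 \<le> N" "\<Sum>(prime_power_parts N) \<le> n" "n < \<Sum>(prime_power_parts (Suc N))"
      using exists_maximal_prime_power_parts_le[of n] by auto
    then show ?thesis
      using exp_sqrt_lt_half_lcm_upto[of N n] dvd_lcm_upto[of 4 N] n
      by (intro exI[of _ "prime_power_parts N"])
        (simp add: finite_prime_power_parts zero_notin_prime_power_parts Lcm_prime_power_parts)
  qed
  then obtain A where "finite A" "0 \<notin> A" "\<Sum>A \<le> n" "4 dvd Lcm A"
    "exp (sqrt ((1/4) * real n * ln (real n))) < real (Lcm A) / 2"
    by blast
  then show ?thesis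
    by (intro exists_Alt_even_order_gt) (simp_all add: finite_F2vec card_F2vec assms(2))
qed

end
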